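(* Let $d\ge 2$ and let $\rho$ be a diagonal symmetric state on $\mathbb{C}^d\otimes\mathbb{C}^d$ that is PPT, with associated matrix $M=M(\rho)$. Let $\ket{u}=\frac{1}{\sqrt d}(1,\dots,1)^T\in\mathbb{R}^d$ and let $M^{+}$ denote the Moore–Penrose pseudo-inverse of $M$. Suppose there exists $\varepsilon\ge 0$ such that (1) $\varepsilon\le M_{ij}$ for all $0\le i,j<d$; (2) $\ket{u}$ lies in the range of $M$ and $\varepsilon d\le \left(\bra{u}M^{+}\ket{u}\right)^{-1}$; (3) for all $0\le i<d$, $M_{ii}+\varepsilon(d-2)\ge\sum_{j\ne i}M_{ji}$. Then $\rho$ is separable.
   Context: Let $\{\ket{0},\dots,\ket{d-1}\}$ be the computational basis of $\mathbb{C}^d$. Define $\ket{D_{ii}}=\ket{ii}$ and, for $i<j$, $\ket{D_{ij}}=(\ket{ij}+\ket{ji})/\sqrt{2}$. A state $\rho$ on $\mathbb{C}^d\otimes\mathbb{C}^d$ is diagonal symmetric (DS) if $\rho=\sum_{0\le i\le j<d}p_{ij}\ket{D_{ij}}\bra{D_{ij}}$ with $p_{ij}\ge 0$ and $\sum_{i\le j}p_{ij}=1$; set $p_{ji}=p_{ij}$. Its associated matrix $M(\rho)$ is the real symmetric $d\times d$ matrix with $M(\rho)_{ii}=p_{ii}$ and $M(\rho)_{ij}=p_{ij}/2$ for $i\ne j$ (the paper writes $\rho_{ij}$ for the entries of $M(\rho)$). $\rho$ is PPT if its partial transpose with respect to the computational basis of the second factor is positive semidefinite. A state is separable if it is a convex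 combination of product states $\rho^A\otimes\rho^B$. *)

theory Defs
  imports "HOL-Analysis.Analysis"
begin

text \<open>Matrices are represented as functions nat => nat => scalar, together with an
explicit dimension n; only entries with indices below n are meaningful.
The space C^d (x) C^d is identified with C^(d*d), the basis vector |i>|k>
having index i*d+k.\<close>

definition mmul :: "nat \<Rightarrow> (nat \<Rightarrow> nat \<Rightarrow> 'a::comm_semiring_0) \<Rightarrow> (nat \<Rightarrow> nat \<Rightarrow> 'a) \<Rightarrow> nat \<Rightarrow> nat \<Rightarrow> 'a" where
  "mmul n A B i j = (\<Sum>k<n. A i k * B k j)"

definition penrose :: "nat \<Rightarrow> (nat \<Rightarrow> nat \<Rightarrow> real) \<Rightarrow> (nat \<Rightarrow> nat \<Rightarrow> real) \<Rightarrow> bool" where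
  "penrose n M X \<longleftrightarrow>
     (\<forall>i j. (n \<le> i \<or> n \<le> j) \<longrightarrow> X i j = 0) \<and>
     (\<forall>i<n. \<forall>j<n. mmul n (mmul n M X) M i j = M i j) \<and>
     (\<forall>i<n. \<forall>j<n. mmul n (mmul n X M) X i j = X i j) \<and>
     (\<forall>i<n. \<forall>j<n. mmul n M X i j = mmul n M X j i) \<and>
     (\<forall>i<n. \<forall>j<n. mmul n X M i j = mmul n X M j i)"

definition pinv :: "nat \<Rightarrow> (nat \<Rightarrow> nat \<Rightarrow> real) \<Rightarrow> nat \<Rightarrow> nat \<Rightarrow> real" where
  "pinv n M = (THE X. penrose n M X)"

definition psd :: "nat \<Rightarrow> (nat \<Rightarrow> nat \<Rightarrow> complex) \<Rightarrow> bool" where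
  "psd n A \<longleftrightarrow> (\<forall>i<n. \<forall>j<n. A i j = cnj (A j i)) \<and>
     (\<forall>v :: nat \<Rightarrow> complex. let q = (\<Sum>i<n. \<Sum>j<n. cnj (v i) * A i j * v j) in Im q = 0 \<and> Re q \<ge> 0)"

definition density :: "nat \<Rightarrow> (nat \<Rightarrow> nat \<Rightarrow> complex) \<Rightarrow> bool" where
  "density n A \<longleftrightarrow> psd n A \<and> (\<Sum>i<n. A i i) = 1"

definition tensor :: "nat \<Rightarrow> (nat \<Rightarrow> nat \<Rightarrow> complex) \<Rightarrow> (nat \<Rightarrow> nat \<Rightarrow> complex) \<Rightarrow> nat \<Rightarrow> nat \<Rightarrow> complex" where
  "tensor d A B a b = A (a div d) (b div d) * B (a mod d) (b mod d)"

text \<open>Partial transpose w.r.t. the computational basis of the second factor: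
<i k| R^T_B |j l> = <i l| R |j k>.\<close>
definition ptrans :: "nat \<Rightarrow> (nat \<Rightarrow> nat \<Rightarrow> complex) \<Rightarrow> nat \<Rightarrow> nat \<Rightarrow> complex" where
  "ptrans d R a b = R ((a div d) * d + b mod d) ((b div d) * d + a mod d)"

definition PPT :: "nat \<Rightarrow> (nat \<Rightarrow> nat \<Rightarrow> complex) \<Rightarrow> bool" where
  "PPT d R \<longleftrightarrow> psd (d * d) (ptrans d R)"

definition separable :: "nat \<Rightarrow> (nat \<Rightarrow> nat \<Rightarrow> complex) \<Rightarrow> bool" where
  "separable d R \<longleftrightarrow> (\<exists>(m::nat) (p::nat \<Rightarrow> real) A B.
     (\<forall>k<m. 0 \<le> p k) \<and> (\<Sum>k<m. p k) = 1 \<and>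
     (\<forall>k<m. density d (A k) \<and> density d (B k)) \<and>
     (\<forall>a<d*d. \<forall>b<d*d. R a b = (\<Sum>k<m. complex_of_real (p k) * tensor d (A k) (B k) a b)))"

definition dicke :: "nat \<Rightarrow> nat \<Rightarrow> nat \<Rightarrow> nat \<Rightarrow> complex" where
  "dicke d i j a =
     (if i = j then (if a = i * d + i then 1 else 0)
      else (if a = i * d + j \<or> a = j * d + i then complex_of_real (1 / sqrt 2) else 0))"

definition ds_state :: "nat \<Rightarrow> (nat \<Rightarrow> nat \<Rightarrow> real) \<Rightarrow> nat \<Rightarrow> nat \<Rightarrow> complex" where
  "ds_state d p a b = (\<Sum>(i,j)\<in>{(i,j). i \<le> j \<and> j < d}.
      complex_of_real (p i j) * dicke d i j a * cnj (dicke d i j b))"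

definition is_ds_coeffs :: "nat \<Rightarrow> (nat \<Rightarrow> nat \<Rightarrow> real) \<Rightarrow> bool" where
  "is_ds_coeffs d p \<longleftrightarrow> (\<forall>i j. i \<le> j \<and> j < d \<longrightarrow> 0 \<le> p i j) \<and>
     (\<Sum>(i,j)\<in>{(i,j). i \<le> j \<and> j < d}. p i j) = 1"

definition ds_matrix :: "nat \<Rightarrow> (nat \<Rightarrow> nat \<Rightarrow> real) \<Rightarrow> nat \<Rightarrow> nat \<Rightarrow> real" where
  "ds_matrix d p i j = (if i = j then p i i else p (min i j) (max i j) / 2)"

end

theory Submission
  imports Defs
begin

text \<open>The associated matrix M is completely positive: with r_i \<ge> 0 the slack in condition (3),
  M = \<epsilon> J + \<Sum>_{i \<noteq> j} (M_ij - \<epsilon>)/2 (e_i + e_j)(e_i + e_j)^T + \<Sum>_i r_i e_i e_i^T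
  has nonnegative coefficients by (1) and (3). A diagonal symmetric operator whose matrix is
  v v^T with v \<ge> 0 is, up to a positive factor, the average of the product states
  |\<psi>_x><\<psi>_x| \<otimes> |\<psi>_x><\<psi>_x| with \<psi>_x = \<Sum>_t sqrt(v_t) i^(x_t) |t> over
  x \<in> {0,1,2,3}^d: the phase average kills every entry <i k|.|j l> with {i, k} \<noteq> {j, l}.
  Hence \<rho> is separable.\<close>

definition sep_cone :: "nat \<Rightarrow> (nat \<Rightarrow> nat \<Rightarrow> complex) \<Rightarrow> bool" where
  "sep_cone d R \<longleftrightarrow> (\<exists>(m::nat) (c::nat \<Rightarrow> real) A B.
     (\<forall>k<m. 0 \<le> c k \<and> density d (A k) \<and> density d (B k)) \<and>
     (\<forall>a<d*d. \<forall>b<d*d. R a b = (\<Sum>k<m. complex_of_real (c k) * tensor d (A k) (B k) a b)))"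

lemma sep_cone_finite_sum:
  fixes S :: "'i set"
  assumes "finite S" and "\<forall>k\<in>S. 0 \<le> c k \<and> density d (A k) \<and> density d (B k)"
    and "\<forall>a<d*d. \<forall>b<d*d. R a b = (\<Sum>k\<in>S. complex_of_real (c k) * tensor d (A k) (B k) a b)"
  shows "sep_cone d R"
proof -
  obtain h where h: "bij_betw h {..<card S} S"
    using ex_bij_betw_nat_finite[OF assms(1)] by (auto simp: atLeast0LessThan)
  then have "h k \<in> S" if "k < card S" for k
    using that by (auto simp: bij_betw_def)
  moreover have "(\<Sum>k\<in>S. complex_of_real (c k) * tensor d (A k) (B k) a b)
      = (\<Sum>k<card S. complex_of_real (c (h k)) * tensor d (A (h k)) (B (h k)) a b)" for a b
    by (rule sum.reindex_bij_betw[OF h, symmetric])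
  ultimately show ?thesis
    unfolding sep_cone_def using assms(2,3)
    by (intro exI[of _ "card S"] exI[of _ "c \<circ> h"] exI[of _ "A \<circ> h"] exI[of _ "B \<circ> h"]) auto
qed

lemma sep_cone_cong:
  assumes "sep_cone d R" and "\<forall>a<d*d. \<forall>b<d*d. R' a b = R a b"
  shows "sep_cone d R'"
  using assms unfolding sep_cone_def by simp

lemma sep_cone_zero: "sep_cone d (\<lambda>a b. 0)"
  unfolding sep_cone_def by (intro exI[of _ "0::nat"]) simp

lemma sep_cone_add:
  assumes "sep_cone d R1" and "sep_cone d R2"
  shows "sep_cone d (\<lambda>a b. R1 a b + R2 a b)"
proof -
  obtain m1 :: nat and c1 A1 B1 where cone1: "\<forall>k<m1. 0 \<le> c1 k \<and> density d (A1 k) \<and> density d (B1 k)"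
    "\<forall>a<d*d. \<forall>b<d*d. R1 a b = (\<Sum>k<m1. complex_of_real (c1 k) * tensor d (A1 k) (B1 k) a b)"
    using assms(1) unfolding sep_cone_def by blast
  obtain m2 :: nat and c2 A2 B2 where cone2: "\<forall>k<m2. 0 \<le> c2 k \<and> density d (A2 k) \<and> density d (B2 k)"
    "\<forall>a<d*d. \<forall>b<d*d. R2 a b = (\<Sum>k<m2. complex_of_real (c2 k) * tensor d (A2 k) (B2 k) a b)"
    using assms(2) unfolding sep_cone_def by blast
  show ?thesis
  proof (rule sep_cone_finite_sum[of "{..<m1} <+> {..<m2}" "case_sum c1 c2" d "case_sum A1 A2" "case_sum B1 B2"])
    show "\<forall>k\<in>{..<m1} <+> {..<m2}. 0 \<le> case_sum c1 c2 k \<and> density d (case_sum A1 A2 k) \<and> density d (case_sum B1 B2 k)"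
      using cone1(1) cone2(1) by auto
    show "\<forall>a<d*d. \<forall>b<d*d. R1 a b + R2 a b = (\<Sum>k\<in>{..<m1} <+> {..<m2}.
        complex_of_real (case_sum c1 c2 k) * tensor d (case_sum A1 A2 k) (case_sum B1 B2 k) a b)"
      using cone1(2) cone2(2) by (simp add: sum.Plus)
  qed simp
qed

lemma sep_cone_sum:
  assumes "finite I" and "\<forall>i\<in>I. sep_cone d (R i)"
  shows "sep_cone d (\<lambda>a b. \<Sum>i\<in>I. R i a b)"
  using assms
proof (induction I rule: finite_induct)
  case empty
  then show ?case using sep_cone_zero by simp
next
  case (insert x F)
  then show ?case using sep_cone_add[of d "R x" "\<lambda>a b. \<Sum>i\<in>F. R i a b"] by simp
qed

lemma sum_lessThan_mult_div_mod:
  fixes g :: "nat \<Rightarrow> nat \<Rightarrow> 'a::comm_monoid_add"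
  shows "(\<Sum>a<d*d. g (a div d) (a mod d)) = (\<Sum>i<d. \<Sum>k<d. g i k)"
proof -
  have "(\<Sum>a<d*d. g (a div d) (a mod d)) = (\<Sum>i<d. \<Sum>a\<in>{i*d..<i*d+d}. g (a div d) (a mod d))"
    using sum.nat_group[of "\<lambda>a. g (a div d) (a mod d)" d d] by simp
  also have "\<dots> = (\<Sum>i<d. \<Sum>k<d. g i k)"
  proof (rule sum.cong[OF refl])
    fix i
    have "(\<Sum>a\<in>{i*d..<i*d+d}. g (a div d) (a mod d)) = (\<Sum>k<d. g ((k + i*d) div d) ((k + i*d) mod d))"
      using sum.shift_bounds_nat_ivl[of "\<lambda>a. g (a div d) (a mod d)" 0 "i*d" d]
      by (simp add: add.commute atLeast0LessThan)
    also have "\<dots> = (\<Sum>k<d. g i k)"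
      by (rule sum.cong) auto
    finally show "(\<Sum>a\<in>{i*d..<i*d+d}. g (a div d) (a mod d)) = (\<Sum>k<d. g i k)" .
  qed
  finally show ?thesis .
qed

lemma trace_tensor: "(\<Sum>a<d*d. tensor d A B a a) = (\<Sum>i<d. A i i) * (\<Sum>k<d. B k k)"
  unfolding tensor_def using sum_lessThan_mult_div_mod[of "\<lambda>i k. A i i * B k k" d]
  by (simp add: sum_product)

lemma separable_if_sep_cone:
  assumes "sep_cone d R" and "(\<Sum>a<d*d. R a a) = 1"
  shows "separable d R"
proof -
  obtain m :: nat and c A B where cone: "\<forall>k<m. 0 \<le> c k \<and> density d (A k) \<and> density d (B k)"
    and R: "\<forall>a<d*d. \<forall>b<d*d. R a b = (\<Sum>k<m. complex_of_real (c k) * tensor d (A k) (B k) a b)"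
    using assms(1) unfolding sep_cone_def by blast
  have "(\<Sum>a<d*d. R a a) = (\<Sum>k<m. complex_of_real (c k) * (\<Sum>a<d*d. tensor d (A k) (B k) a a))"
    using R by (simp add: sum_distrib_left sum.swap[of _ "{..<d*d}"])
  also have "\<dots> = (\<Sum>k<m. complex_of_real (c k))"
    using cone by (intro sum.cong refl) (simp add: trace_tensor density_def)
  finally have "(\<Sum>k<m. c k) = 1"
    using assms(2) by (metis of_real_eq_1_iff of_real_sum)
  then show ?thesis
    unfolding separable_def using cone R by blast
qed

lemma density_outer:
  fixes \<psi> :: "nat \<Rightarrow> complex"
  assumes "(\<Sum>t<d. \<psi> t * cnj (\<psi> t)) = 1"
  shows "density d (\<lambda>i j. \<psi> i * cnj (\<psi> j))"
proof -
  have "Im q = 0 \<and> 0 \<le> Re q" if q: "q = (\<Sum>i<d. \<Sum>j<d. cnj (v i) * (\<psi> i * cnj (\<psi> j)) * v j)" for v q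
  proof -
    define z where "z = (\<Sum>i<d. cnj (v i) * \<psi> i)"
    have "q = z * cnj z"
      unfolding q z_def cnj_sum sum_product by (simp add: mult_ac)
    then show ?thesis
      by (simp add: complex_mult_cnj)
  qed
  then show ?thesis
    unfolding density_def psd_def Let_def using assms by simp
qed

lemma pair_eq_if_indicator_sums_eq:
  fixes i j k l :: nat
  assumes "\<forall>t<d. (of_bool (t = i) + of_bool (t = k) :: nat) = of_bool (t = j) + of_bool (t = l)"
    and "i < d" "j < d" "k < d" "l < d"
  shows "{i, k} = {j, l}"
proof -
  have count: "(of_bool (t = i) + of_bool (t = k) :: nat) = of_bool (t = j) + of_bool (t = l)" if "t \<in> {i, j, k, l}" for t
    using assms that by auto
  from count[of i] count[of k] count[of j] count[of l] show ?thesis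
    by (cases "i = j"; cases "k = l"; cases "i = l"; cases "k = j"; simp add: doubleton_eq_iff)
qed

lemma prod_power_of_bool_eq:
  fixes f :: "nat \<Rightarrow> 'a::comm_monoid_mult"
  assumes "finite S" and "i \<in> S"
  shows "(\<Prod>t\<in>S. f t ^ (of_bool (t = i) :: nat)) = f i"
proof -
  have "(\<Prod>t\<in>S. f t ^ (of_bool (t = i) :: nat)) = (\<Prod>t\<in>S. if t = i then f t else 1)"
    by (rule prod.cong) auto
  then show ?thesis
    using assms by (simp add: prod.delta)
qed

lemma sum_four_phase_powers:
  fixes a b :: nat
  assumes "a \<le> 2" and "b \<le> 2"
  shows "(\<Sum>r<4. (\<i> ^ a * (-\<i>) ^ b) ^ r) = (if a = b then 4 else 0)"
proof -
  have "a = 0 \<or> a = 1 \<or> a = 2" "b = 0 \<or> b = 1 \<or> b = 2"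
    using assms by auto
  then show ?thesis
    by (auto simp: eval_nat_numeral)
qed

lemma phase_average:
  assumes "i < d" "j < d" "k < d" "l < d"
  shows "(\<Sum>x\<in>PiE {..<d} (\<lambda>_. {..<4::nat}). \<i> ^ x i * \<i> ^ x k * (-\<i>) ^ x j * (-\<i>) ^ x l)
       = (if {i, k} = {j, l} then 4 ^ d else 0)"
proof -
  define c where "c t = (of_bool (t = i) + of_bool (t = k) :: nat)" for t
  define c' where "c' t = (of_bool (t = j) + of_bool (t = l) :: nat)" for t
  define z where "z t = \<i> ^ c t * (-\<i>) ^ c' t" for t
  have "\<i> ^ x i * \<i> ^ x k * (-\<i>) ^ x j * (-\<i>) ^ x l = (\<Prod>t<d. z t ^ x t)" for x :: "nat \<Rightarrow> nat"
  proof -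
    have "(\<Prod>t<d. z t ^ x t) = (\<Prod>t<d. (\<i> ^ x t) ^ (of_bool (t = i) :: nat) * (\<i> ^ x t) ^ (of_bool (t = k) :: nat)
          * ((-\<i>) ^ x t) ^ (of_bool (t = j) :: nat) * ((-\<i>) ^ x t) ^ (of_bool (t = l) :: nat))"
      unfolding z_def c_def c'_def
      by (intro prod.cong refl) (simp add: power_mult_distrib power_add power_mult[symmetric] mult_ac)
    then show ?thesis
      using assms by (simp add: prod.distrib prod_power_of_bool_eq)
  qed
  then have "(\<Sum>x\<in>PiE {..<d} (\<lambda>_. {..<4::nat}). \<i> ^ x i * \<i> ^ x k * (-\<i>) ^ x j * (-\<i>) ^ x l)
      = (\<Prod>t<d. \<Sum>r<4. z t ^ r)"
    by (simp add: prod_sum_PiE)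
  also have "\<dots> = (\<Prod>t<d. if c t = c' t then 4 else 0)"
    unfolding z_def by (intro prod.cong refl sum_four_phase_powers) (auto simp: c_def c'_def)
  also have "\<dots> = (if \<forall>t<d. c t = c' t then 4 ^ d else 0)"
    by (auto simp: prod_zero)
  also have "(\<forall>t<d. c t = c' t) \<longleftrightarrow> {i, k} = {j, l}"
    using pair_eq_if_indicator_sums_eq[of d i k j l] assms unfolding c_def c'_def
    by (auto simp: doubleton_eq_iff)
  finally show ?thesis .
qed

definition ds_operator :: "nat \<Rightarrow> (nat \<Rightarrow> nat \<Rightarrow> real) \<Rightarrow> nat \<Rightarrow> nat \<Rightarrow> complex" where
  "ds_operator d M a b =
     (if {a div d, a mod d} = {b div d, b mod d} then complex_of_real (M (a div d) (a mod d)) else 0)"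

lemma div_mod_less_if_less_square:
  fixes a d :: nat
  assumes "a < d * d"
  shows "a div d < d" and "a mod d < d"
proof -
  have "0 < d"
    using assms by (cases d) auto
  then show "a div d < d" "a mod d < d"
    using assms by (simp_all add: div_less_iff_less_mult)
qed

lemma sep_cone_ds_operator_outer:
  assumes "\<forall>t<d. 0 \<le> v t"
  shows "sep_cone d (ds_operator d (\<lambda>i k. v i * v k))"
proof (cases "\<forall>t<d. v t = 0")
  case True
  show ?thesis
    by (rule sep_cone_cong[OF sep_cone_zero])
      (simp add: ds_operator_def True div_mod_less_if_less_square)
next
  case False
  define s where "s = (\<Sum>t<d. v t)"
  have "s > 0"
    unfolding s_def using False assms sum_nonneg_eq_0_iff[of "{..<d}" v]
    by (metis finite_lessThan lessThan_iff order_less_le sum_nonneg)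
  define w where "w t = sqrt (v t / s)" for t
  define \<psi> where "\<psi> x t = complex_of_real (w t) * \<i> ^ x t" for x :: "nat \<Rightarrow> nat" and t
  define A where "A x i j = \<psi> x i * cnj (\<psi> x j)" for x i j
  have "density d (A x)" for x
    unfolding A_def
  proof (rule density_outer)
    have "\<psi> x t * cnj (\<psi> x t) = complex_of_real (v t / s)" if "t < d" for t
      using assms that \<open>s > 0\<close> unfolding \<psi>_def w_def
      by (simp add: power_mult_distrib[symmetric] mult_ac flip: of_real_mult)
    then show "(\<Sum>t<d. \<psi> x t * cnj (\<psi> x t)) = 1"
      using \<open>s > 0\<close> by (simp add: s_def flip: of_real_sum sum_divide_distrib)
  qed
  moreover have "ds_operator d (\<lambda>i k. v i * v k) a b =
      (\<Sum>x\<in>PiE {..<d} (\<lambda>_. {..<4}). complex_of_real (s\<^sup>2 / 4 ^ d) * tensor d (A x) (A x) a b)"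
    if "a < d * d" "b < d * d" for a b
  proof -
    define i k j l where "i = a div d" and "k = a mod d" and "j = b div d" and "l = b mod d"
    have lt: "i < d" "k < d" "j < d" "l < d"
      unfolding i_def k_def j_def l_def using that by (auto dest: div_mod_less_if_less_square)
    define W where "W = w i * w j * w k * w l"
    have "tensor d (A x) (A x) a b = complex_of_real W * (\<i> ^ x i * \<i> ^ x k * (-\<i>) ^ x j * (-\<i>) ^ x l)" for x
      unfolding tensor_def A_def \<psi>_def W_def i_def j_def k_def l_def by (simp add: mult_ac)
    then have "(\<Sum>x\<in>PiE {..<d} (\<lambda>_. {..<4}). complex_of_real (s\<^sup>2 / 4 ^ d) * tensor d (A x) (A x) a b)
        = complex_of_real (s\<^sup>2 / 4 ^ d * W) *
          (\<Sum>x\<in>PiE {..<d} (\<lambda>_. {..<4}). \<i> ^ x i * \<i> ^ x k * (-\<i>) ^ x j * (-\<i>) ^ x l)"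
      by (simp add: sum_distrib_left mult.assoc)
    also have "\<dots> = complex_of_real (s\<^sup>2 / 4 ^ d * W) * (if {i, k} = {j, l} then 4 ^ d else 0)"
      by (simp only: phase_average[OF lt(1,3,2,4)])
    also have "\<dots> = ds_operator d (\<lambda>i k. v i * v k) a b"
    proof (cases "{i, k} = {j, l}")
      case True
      then have "W = (w i * w i) * (w k * w k)"
        unfolding W_def
        by (auto simp: doubleton_eq_iff)
      also have "\<dots> = v i * v k / s\<^sup>2"
        using assms lt \<open>s > 0\<close> unfolding w_def by (simp add: power2_eq_square)
      finally show ?thesis
        using True \<open>s > 0\<close> unfolding ds_operator_def i_def j_def k_def l_def by simp
    next
      case False
      then show ?thesis
        unfolding ds_operator_def i_def j_def k_def l_def by simp
    qed
    finally show ?thesis ..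
  qed
  ultimately show ?thesis
    by (intro sep_cone_finite_sum[of "PiE {..<d} (\<lambda>_. {..<4::nat})" "\<lambda>_. s\<^sup>2 / 4 ^ d" d A A])
      (auto simp: finite_PiE)
qed

definition completely_positive :: "nat \<Rightarrow> (nat \<Rightarrow> nat \<Rightarrow> real) \<Rightarrow> bool" where
  "completely_positive d M \<longleftrightarrow> (\<exists>(m::nat) (v::nat \<Rightarrow> nat \<Rightarrow> real).
     (\<forall>k<m. \<forall>t<d. 0 \<le> v k t) \<and> (\<forall>i<d. \<forall>j<d. M i j = (\<Sum>k<m. v k i * v k j)))"

lemma completely_positiveI:
  fixes S :: "'x set" and c :: "'x \<Rightarrow> real"
  assumes "finite S" and "\<forall>x\<in>S. 0 \<le> c x \<and> (\<forall>t<d. 0 \<le> v x t)"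
    and "\<forall>i<d. \<forall>j<d. M i j = (\<Sum>x\<in>S. c x * v x i * v x j)"
  shows "completely_positive d M"
proof -
  obtain h where h: "bij_betw h {..<card S} S"
    using ex_bij_betw_nat_finite[OF assms(1)] by (auto simp: atLeast0LessThan)
  define v' where "v' k t = sqrt (c (h k)) * v (h k) t" for k t
  have hS: "h k \<in> S" if "k < card S" for k
    using h that by (auto simp: bij_betw_def)
  have "(\<Sum>x\<in>S. c x * v x i * v x j) = (\<Sum>k<card S. v' k i * v' k j)" for i j
  proof -
    have "(\<Sum>x\<in>S. c x * v x i * v x j) = (\<Sum>k<card S. c (h k) * v (h k) i * v (h k) j)"
      by (rule sum.reindex_bij_betw[OF h, symmetric])
    also have "\<dots> = (\<Sum>k<card S. v' k i * v' k j)"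
      using assms(2) hS unfolding v'_def by (intro sum.cong refl) (simp add: mult_ac)
    finally show ?thesis .
  qed
  then show ?thesis
    unfolding completely_positive_def using assms(2,3) hS
    by (intro exI[of _ "card S"] exI[of _ v']) (auto simp: v'_def)
qed

lemma sep_cone_ds_operator_if_completely_positive:
  assumes "completely_positive d M"
  shows "sep_cone d (ds_operator d M)"
proof -
  obtain m :: nat and v where v: "\<forall>k<m. \<forall>t<d. 0 \<le> v k t"
    and M: "\<forall>i<d. \<forall>j<d. M i j = (\<Sum>k<m. v k i * v k j)"
    using assms unfolding completely_positive_def by blast
  have "sep_cone d (\<lambda>a b. \<Sum>k<m. ds_operator d (\<lambda>i j. v k i * v k j) a b)"
    using v by (intro sep_cone_sum ballI sep_cone_ds_operator_outer) auto
  then show ?thesis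
    by (rule sep_cone_cong)
      (simp add: ds_operator_def M div_mod_less_if_less_square)
qed

definition dominance_weight :: "nat \<Rightarrow> real \<Rightarrow> (nat \<Rightarrow> nat \<Rightarrow> real) \<Rightarrow> nat \<Rightarrow> nat \<Rightarrow> real" where
  "dominance_weight d \<epsilon> M i j =
     (if i = j then M i i + \<epsilon> * (real d - 2) - (\<Sum>l\<in>{..<d} - {i}. M l i) else (M i j - \<epsilon>) / 2)"

lemma sum_dominance_weight_indicators:
  fixes M :: "nat \<Rightarrow> nat \<Rightarrow> real"
  assumes sym: "\<forall>i<d. \<forall>j<d. M i j = M j i" and "i < d" "k < d"
  shows "(\<Sum>i'<d. \<Sum>j'<d. dominance_weight d \<epsilon> M i' j' * of_bool (i \<in> {i', j'}) * of_bool (k \<in> {i', j'}))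
    = M i k - \<epsilon>"
proof (cases "i = k")
  case False
  have "(\<Sum>i'<d. \<Sum>j'<d. g i' j' * of_bool (i \<in> {i', j'}) * of_bool (k \<in> {i', j'}))
      = (\<Sum>i'<d. \<Sum>j'<d. (if j' = k then if i' = i then g i' j' else 0 else 0)
          + (if j' = i then if i' = k then g i' j' else 0 else 0))" for g :: "nat \<Rightarrow> nat \<Rightarrow> real"
    using False by (intro sum.cong refl) auto
  then show ?thesis
    using False assms by (simp add: sum.distrib dominance_weight_def)
next
  case True
  let ?g = "dominance_weight d \<epsilon> M"
  have g_sym: "?g i' j' = ?g j' i'" if "i' < d" "j' < d" for i' j'
    using sym that unfolding dominance_weight_def by auto
  have if_sum: "(\<Sum>j'<d. if i' = i then f j' else 0) = (if i' = i then sum f {..<d} else 0)"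
    for i' and f :: "nat \<Rightarrow> real"
    by simp
  have "(\<Sum>i'<d. \<Sum>j'<d. ?g i' j' * of_bool (i \<in> {i', j'}) * of_bool (k \<in> {i', j'}))
      = (\<Sum>i'<d. \<Sum>j'<d. (if i' = i then ?g i' j' else 0) + (if j' = i then ?g i' j' else 0)
          - (if i' = i then if j' = i then ?g i' j' else 0 else 0))"
    using True by (intro sum.cong refl) auto
  also have "\<dots> = (\<Sum>j<d. ?g i j) + (\<Sum>j<d. ?g j i) - ?g i i"
    using assms by (simp add: sum.distrib sum_subtractf if_sum)
  also have "\<dots> = ?g i i + 2 * (\<Sum>j\<in>{..<d} - {i}. ?g j i)"
    using assms g_sym by (simp add: sum.remove)
  also have "2 * (\<Sum>j\<in>{..<d} - {i}. ?g j i) = (\<Sum>j\<in>{..<d} - {i}. M j i - \<epsilon>)"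
    unfolding sum_distrib_left dominance_weight_def by (intro sum.cong) auto
  also have "\<dots> = (\<Sum>j\<in>{..<d} - {i}. M j i) - \<epsilon> * (real d - 1)"
    using assms by (simp add: sum_subtractf of_nat_diff)
  finally show ?thesis
    using True unfolding dominance_weight_def by (simp add: algebra_simps)
qed

lemma completely_positive_if_dominant:
  fixes M :: "nat \<Rightarrow> nat \<Rightarrow> real"
  assumes sym: "\<forall>i<d. \<forall>j<d. M i j = M j i"
    and "0 \<le> \<epsilon>" and lower: "\<forall>i<d. \<forall>j<d. \<epsilon> \<le> M i j"
    and dominant: "\<forall>i<d. (\<Sum>j\<in>{..<d} - {i}. M j i) \<le> M i i + \<epsilon> * (real d - 2)"
  shows "completely_positive d M"
proof -
  let ?g = "dominance_weight d \<epsilon> M"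
  define e :: "nat \<Rightarrow> nat \<Rightarrow> nat \<Rightarrow> real" where "e i j t = of_bool (t \<in> {i, j})" for i j t
  show ?thesis
  proof (rule completely_positiveI[of "insert None (Some ` ({..<d} \<times> {..<d}))"
        "\<lambda>x. case x of None \<Rightarrow> \<epsilon> | Some (i, j) \<Rightarrow> ?g i j"
        d "\<lambda>x. case x of None \<Rightarrow> (\<lambda>_. 1) | Some (i, j) \<Rightarrow> e i j"])
    show "\<forall>x\<in>insert None (Some ` ({..<d} \<times> {..<d})). 0 \<le> (case x of None \<Rightarrow> \<epsilon> | Some (i, j) \<Rightarrow> ?g i j)
        \<and> (\<forall>t<d. 0 \<le> (case x of None \<Rightarrow> (\<lambda>_. 1) | Some (i, j) \<Rightarrow> e i j) t)"
      using \<open>0 \<le> \<epsilon>\<close> lower dominant unfolding dominance_weight_def e_def by auto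
    show "\<forall>i<d. \<forall>k<d. M i k = (\<Sum>x\<in>insert None (Some ` ({..<d} \<times> {..<d})).
        (case x of None \<Rightarrow> \<epsilon> | Some (i, j) \<Rightarrow> ?g i j) *
        (case x of None \<Rightarrow> (\<lambda>_. 1) | Some (i, j) \<Rightarrow> e i j) i *
        (case x of None \<Rightarrow> (\<lambda>_. 1) | Some (i, j) \<Rightarrow> e i j) k)"
      using sum_dominance_weight_indicators[OF sym]
      by (simp add: sum.reindex sum.cartesian_product split_beta e_def)
  qed simp
qed

lemma pair_index_less:
  fixes i j d :: nat
  assumes "i < d" and "j < d"
  shows "i * d + j < d * d"
proof -
  have "i * d + j < (i + 1) * d"
    using assms by simp
  also have "\<dots> \<le> d * d"
    using assms by (intro mult_le_mono1) simp
  finally show ?thesis .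
qed

lemma dicke_eq:
  assumes "i \<le> j" and "j < d"
  shows "dicke d i j a =
    (if {a div d, a mod d} = {i, j} then if i = j then 1 else complex_of_real (1 / sqrt 2) else 0)"
proof -
  have index: "a = x * d + y \<longleftrightarrow> a div d = x \<and> a mod d = y" if "y < d" for x y
    using that div_mult_mod_eq[of a d] by auto
  show ?thesis
    using assms index[of i j] index[of j i] index[of i i]
    unfolding dicke_def by (auto simp: doubleton_eq_iff)
qed

lemma dicke_nonzero_index:
  assumes "dicke d i j a \<noteq> 0" and "i \<le> j" and "j < d"
  shows "i = min (a div d) (a mod d)" and "j = max (a div d) (a mod d)"
proof -
  have "{a div d, a mod d} = {i, j}"
    using assms dicke_eq[OF assms(2,3), of a] by (auto split: if_splits)
  then show "i = min (a div d) (a mod d)" "j = max (a div d) (a mod d)"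
    using assms(2) by (auto simp: doubleton_eq_iff)
qed

lemma dicke_norm:
  assumes "i \<le> j" and "j < d"
  shows "(\<Sum>a<d*d. dicke d i j a * cnj (dicke d i j a)) = 1"
proof (cases "i = j")
  case True
  then have "(\<Sum>a<d*d. dicke d i j a * cnj (dicke d i j a)) = (\<Sum>a<d*d. if a = i * d + i then 1 else 0)"
    unfolding dicke_def by (intro sum.cong refl) auto
  then show ?thesis
    using pair_index_less[of i d i] assms True by simp
next
  case False
  have "i * d + j \<noteq> j * d + i"
  proof
    assume "i * d + j = j * d + i"
    then have "(i * d + j) mod d = (j * d + i) mod d"
      by (rule arg_cong)
    then show False
      using assms False by simp
  qed
  moreover have "complex_of_real (1 / sqrt 2) * cnj (complex_of_real (1 / sqrt 2)) = 1 / 2"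
    by (simp flip: of_real_mult)
  ultimately have "(\<Sum>a<d*d. dicke d i j a * cnj (dicke d i j a))
      = (\<Sum>a<d*d. (if a = i * d + j then 1 / 2 else 0) + (if a = j * d + i then 1 / 2 else 0))"
    using False unfolding dicke_def by (intro sum.cong refl) auto
  then show ?thesis
    using pair_index_less[of i d j] pair_index_less[of j d i] assms by (simp add: sum.distrib)
qed

lemma ds_state_eq_ds_operator:
  assumes "a < d * d"
  shows "ds_state d p a b = ds_operator d (ds_matrix d p) a b"
proof -
  define i0 k0 where "i0 = a div d" and "k0 = a mod d"
  define \<alpha> \<beta> where "\<alpha> = min i0 k0" and "\<beta> = max i0 k0"
  define P where "P = {(i, j). i \<le> j \<and> j < d}"
  have lt: "i0 < d" "k0 < d"
    unfolding i0_def k0_def using assms by (auto dest: div_mod_less_if_less_square)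
  have "finite P"
    by (rule finite_subset[of _ "{..<d} \<times> {..<d}"]) (auto simp: P_def)
  have "(\<alpha>, \<beta>) \<in> P"
    unfolding P_def \<alpha>_def \<beta>_def using lt by auto
  have "ds_state d p a b = (\<Sum>x\<in>P. if x = (\<alpha>, \<beta>) then
      complex_of_real (p \<alpha> \<beta>) * dicke d \<alpha> \<beta> a * cnj (dicke d \<alpha> \<beta> b) else 0)"
    unfolding ds_state_def P_def \<alpha>_def \<beta>_def i0_def k0_def
    by (intro sum.cong refl) (auto dest: dicke_nonzero_index)
  also have "\<dots> = complex_of_real (p \<alpha> \<beta>) * dicke d \<alpha> \<beta> a * cnj (dicke d \<alpha> \<beta> b)"
    using \<open>finite P\<close> \<open>(\<alpha>, \<beta>) \<in> P\<close> by (simp add: sum.delta')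
  also have "\<dots> = ds_operator d (ds_matrix d p) a b"
  proof -
    have pair: "{i0, k0} = {\<alpha>, \<beta>}" "\<alpha> \<le> \<beta>" "\<beta> < d" "\<alpha> = \<beta> \<longleftrightarrow> i0 = k0"
      using lt unfolding \<alpha>_def \<beta>_def by (auto simp: min_def max_def)
    have "ds_matrix d p i0 k0 = (if \<alpha> = \<beta> then p \<alpha> \<beta> else p \<alpha> \<beta> / 2)"
      using pair(4) unfolding ds_matrix_def \<alpha>_def \<beta>_def by simp
    then show ?thesis
      using pair dicke_eq[OF pair(2,3), of a] dicke_eq[OF pair(2,3), of b]
      unfolding ds_operator_def i0_def[symmetric] k0_def[symmetric]
      by (auto simp flip: of_real_mult)
  qed
  finally show ?thesis .
qed

lemma trace_ds_state:
  assumes "is_ds_coeffs d p"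
  shows "(\<Sum>a<d*d. ds_state d p a a) = 1"
proof -
  define P where "P = {(i, j). i \<le> j \<and> j < d}"
  have "(\<Sum>a<d*d. ds_state d p a a)
      = (\<Sum>(i, j)\<in>P. complex_of_real (p i j) * (\<Sum>a<d*d. dicke d i j a * cnj (dicke d i j a)))"
    unfolding ds_state_def P_def[symmetric]
    by (subst sum.swap) (simp add: sum_distrib_left mult.assoc split_beta)
  also have "\<dots> = (\<Sum>(i, j)\<in>P. complex_of_real (p i j))"
    by (intro sum.cong refl) (auto simp: P_def dicke_norm)
  also have "\<dots> = 1"
    using assms unfolding is_ds_coeffs_def P_def by (simp flip: of_real_sum add: split_beta)
  finally show ?thesis .
qed

theorem theorem5:
  fixes d :: nat and p :: "nat \<Rightarrow> nat \<Rightarrow> real" and \<epsilon> :: real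
  defines "M \<equiv> ds_matrix d p"
      and "u \<equiv> (\<lambda>i::nat. 1 / sqrt (real d))"
  assumes "2 \<le> d"
      and "is_ds_coeffs d p"
      and "PPT d (ds_state d p)"
      and "0 \<le> \<epsilon>"
      and "\<forall>i<d. \<forall>j<d. \<epsilon> \<le> M i j"
      and "\<exists>x::nat \<Rightarrow> real. \<forall>i<d. (\<Sum>j<d. M i j * x j) = u i"
      and "\<epsilon> * real d \<le> inverse (\<Sum>i<d. \<Sum>j<d. u i * pinv d M i j * u j)"
      and "\<forall>i<d. M i i + \<epsilon> * (real d - 2) \<ge> (\<Sum>j\<in>{..<d} - {i}. M j i)"
  shows "separable d (ds_state d p)"
proof -
  have "\<forall>i<d. \<forall>j<d. M i j = M j i"
    unfolding M_def ds_matrix_def by (auto simp: min.commute max.commute)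
  then have "completely_positive d M"
    using completely_positive_if_dominant assms(6,7,10) by blast
  then have "sep_cone d (ds_operator d M)"
    by (rule sep_cone_ds_operator_if_completely_positive)
  then have "sep_cone d (ds_state d p)"
    by (rule sep_cone_cong) (simp add: ds_state_eq_ds_operator M_def)
  then show ?thesis
    using trace_ds_state[OF assms(4)] by (rule separable_if_sep_cone)
qed

end
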